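(* Let $k\in\mathbb{N}$, let $G_{\pm}(x)=|1+e^{2\pi i x}\pm e^{2\pi i (k+2)x}|^2$, and for $\rho\in\mathbb{N}$ put $A(\rho)=\sum_{\mu=0}^{\rho}\binom{\rho}{\mu}^2\binom{2\rho-2\mu}{\rho-\mu}$. Let $\rho\in\mathbb{N}$ with $\rho\le k+1$ and let $\tau>0$ be real. Then, for both choices of sign, $$\int_0^{1/2}G_{\pm}^{\tau}\le \tfrac12\,9^{\tau-\rho}A(\rho)\quad\text{if }\tau>\rho,\qquad \int_0^{1/2}G_{\pm}^{\tau}\le \tfrac12\,A(\rho)^{\tau/\rho}\quad\text{if }\tau<\rho.$$
   Context: The values $A(0),\dots,A(6)$ are $1,3,15,93,639,4653,35169$. For $\rho\le k+1$ one has $\int_0^{1/2}G_\pm^\rho=\frac12A(\rho)$, and $0\le G_\pm\le 9$. *)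

theory Defs
  imports "HOL-Analysis.Analysis"
begin

definition Gpm :: "nat \<Rightarrow> real \<Rightarrow> real \<Rightarrow> real" where
  "Gpm k s x = (cmod (1 + cis (2 * pi * x) + complex_of_real s * cis (2 * pi * real (k + 2) * x)))\<^sup>2"

definition A :: "nat \<Rightarrow> nat" where
  "A \<rho> = (\<Sum>\<mu>=0..\<rho>. (\<rho> choose \<mu>)\<^sup>2 * ((2*\<rho> - 2*\<mu>) choose (\<rho> - \<mu>)))"

end

theory Submission imports Defs begin

text \<open>Expanding \<open>(1 + e(x) \<pm> e((k+2)x))^\<rho>\<close>, where \<open>e(x) = exp(2\<pi>ix)\<close>, by the trinomial theorem
gives a trigonometric polynomial whose frequencies \<open>b + (k+2)c\<close> (with \<open>b + c \<le> \<rho> \<le> k+1\<close>) are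
pairwise distinct, so Parseval's identity on half a period yields \<open>\<integral>[0,1/2] G^\<rho> = A(\<rho>)/2\<close>; the
squared trinomial coefficients sum to \<open>A(\<rho>)\<close> by Vandermonde's identity. For \<open>\<tau> > \<rho>\<close> one bounds
\<open>G^\<tau> \<le> 9^(\<tau>-\<rho>) G^\<rho>\<close>; for \<open>\<tau> < \<rho>\<close> the concavity of \<open>y \<mapsto> y^(\<tau>/\<rho>)\<close> (Jensen's
inequality) bounds the mean of \<open>G^\<tau>\<close> by the \<open>\<tau>/\<rho>\<close>-th power of the mean of \<open>G^\<rho>\<close>.\<close>

lemma trinomial_expansion:
  fixes u v :: "'a :: comm_ring_1"
  shows "(1 + u + v) ^ r =
    (\<Sum>(c, b)\<in>Sigma {..r} (\<lambda>c. {..r - c}). of_nat (r choose c) * of_nat ((r - c) choose b) * v ^ c * u ^ b)"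
proof -
  have "(1 + u + v) ^ r = (v + (u + 1)) ^ r" by (simp add: algebra_simps)
  also have "\<dots> = (\<Sum>c\<le>r. of_nat (r choose c) * v ^ c * (u + 1) ^ (r - c))" by (rule binomial_ring)
  also have "\<dots> = (\<Sum>c\<le>r. \<Sum>b\<le>r - c. of_nat (r choose c) * of_nat ((r - c) choose b) * v ^ c * u ^ b)"
    by (rule sum.cong[OF refl]) (simp add: binomial_ring sum_distrib_left mult_ac)
  finally show ?thesis by (simp add: sum.Sigma)
qed

lemma cmod_sum_cis_squared:
  assumes "finite I"
  shows "(cmod (\<Sum>p\<in>I. complex_of_real (w p) * cis (\<theta> p)))\<^sup>2 =
    (\<Sum>p\<in>I. \<Sum>q\<in>I. w p * w q * cos (\<theta> p - \<theta> q))"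
proof -
  have "(cmod (\<Sum>p\<in>I. complex_of_real (w p) * cis (\<theta> p)))\<^sup>2 =
      (\<Sum>p\<in>I. w p * cos (\<theta> p))\<^sup>2 + (\<Sum>p\<in>I. w p * sin (\<theta> p))\<^sup>2"
    by (simp add: cmod_power2 Re_sum Im_sum)
  also have "\<dots> = (\<Sum>p\<in>I. \<Sum>q\<in>I. w p * w q * cos (\<theta> p - \<theta> q))"
    by (simp add: power2_eq_square sum_product sum.distrib[symmetric] cos_diff algebra_simps)
  finally show ?thesis .
qed

lemma has_integral_cos_int_half_period:
  fixes d :: int
  shows "((\<lambda>x. cos (2 * pi * of_int d * x)) has_integral (if d = 0 then 1/2 else 0)) {0..1/2}"
proof (cases "d = 0")
  case True
  then show ?thesis using has_integral_const_real[of "1::real" 0 "1/2"] by simp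
next
  case False
  have "((\<lambda>x. cos (2 * pi * of_int d * x)) has_integral
      sin (2 * pi * of_int d * (1/2)) / (2 * pi * of_int d) - sin (2 * pi * of_int d * 0) / (2 * pi * of_int d))
      {0..1/2}"
  proof (rule fundamental_theorem_of_calculus)
    fix x :: real
    have "((\<lambda>x. sin (2 * pi * of_int d * x) / (2 * pi * of_int d)) has_real_derivative
          cos (2 * pi * of_int d * x) * (2 * pi * of_int d) / (2 * pi * of_int d)) (at x within {0..1/2})"
      by (auto intro!: derivative_eq_intros)
    then show "((\<lambda>x. sin (2 * pi * of_int d * x) / (2 * pi * of_int d)) has_vector_derivative
          cos (2 * pi * of_int d * x)) (at x within {0..1/2})"
      using False by (simp add: has_real_derivative_iff_has_vector_derivative)
  qed simp
  moreover have "sin (2 * pi * of_int d * (1/2)) = 0"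
    using sin_times_pi_eq_0[of "of_int d"] by (simp add: mult.commute)
  ultimately show ?thesis using False by simp
qed

lemma parseval_half_period:
  fixes n :: "'i \<Rightarrow> int"
  assumes "finite I" and "inj_on n I"
  shows "((\<lambda>x. (cmod (\<Sum>p\<in>I. complex_of_real (w p) * cis (2 * pi * of_int (n p) * x)))\<^sup>2)
    has_integral (\<Sum>p\<in>I. (w p)\<^sup>2) / 2) {0..1/2}"
proof -
  have cos_sum_integral: "((\<lambda>x. \<Sum>p\<in>I. \<Sum>q\<in>I. w p * w q * cos (2 * pi * of_int (n p - n q) * x)) has_integral
      (\<Sum>p\<in>I. \<Sum>q\<in>I. w p * w q * (if n p - n q = 0 then 1/2 else 0))) {0..1/2}"
    by (intro has_integral_sum assms(1) has_integral_mult_right has_integral_cos_int_half_period)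
  have "(\<Sum>q\<in>I. w p * w q * (if n p - n q = 0 then 1/2 else 0)) = (w p)\<^sup>2 / 2"
    if "p \<in> I" for p
  proof -
    have "(\<Sum>q\<in>I. w p * w q * (if n p - n q = 0 then 1/2 else 0)) =
        (\<Sum>q\<in>I. if p = q then w p * w q / 2 else 0)"
      using assms(2) that by (intro sum.cong) (auto dest: inj_onD)
    also have "\<dots> = (w p)\<^sup>2 / 2" using that assms(1) by (simp add: power2_eq_square)
    finally show ?thesis .
  qed
  then have total: "(\<Sum>p\<in>I. \<Sum>q\<in>I. w p * w q * (if n p - n q = 0 then 1/2 else 0)) =
      (\<Sum>p\<in>I. (w p)\<^sup>2) / 2"
    unfolding sum_divide_distrib by (rule sum.cong[OF refl])
  have integrand: "(\<lambda>x. (cmod (\<Sum>p\<in>I. complex_of_real (w p) * cis (2 * pi * of_int (n p) * x)))\<^sup>2) =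
      (\<lambda>x. \<Sum>p\<in>I. \<Sum>q\<in>I. w p * w q * cos (2 * pi * of_int (n p - n q) * x))"
    by (simp add: cmod_sum_cis_squared[OF assms(1)] algebra_simps)
  show ?thesis
    unfolding integrand using cos_sum_integral unfolding total .
qed

text \<open>The term \<open>v\<^sup>c u\<^sup>b\<close> of the trinomial expansion, with \<open>u = e(x)\<close> and
\<open>v = \<pm>e((k+2)x)\<close>, has weight \<open>trinomial_weight r s (c, b)\<close> and frequency
\<open>trinomial_freq k (c, b)\<close>.\<close>

definition trinomial_terms :: "nat \<Rightarrow> (nat \<times> nat) set" where
  "trinomial_terms r = Sigma {..r} (\<lambda>c. {..r - c})"

definition trinomial_weight :: "nat \<Rightarrow> real \<Rightarrow> nat \<times> nat \<Rightarrow> real" where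
  "trinomial_weight r s p = real (r choose fst p) * real ((r - fst p) choose snd p) * s ^ fst p"

definition trinomial_freq :: "nat \<Rightarrow> nat \<times> nat \<Rightarrow> int" where
  "trinomial_freq k p = int (snd p + (k + 2) * fst p)"

lemma finite_trinomial_terms: "finite (trinomial_terms r)"
  unfolding trinomial_terms_def by auto

lemma Gpm_power_eq_cmod_sum:
  "Gpm k s x ^ r = (cmod (\<Sum>p\<in>trinomial_terms r.
     complex_of_real (trinomial_weight r s p) * cis (2 * pi * of_int (trinomial_freq k p) * x)))\<^sup>2"
proof -
  have expansion_term: "of_nat (r choose fst p) * of_nat ((r - fst p) choose snd p) *
        (complex_of_real s * cis (2 * pi * real (k + 2) * x)) ^ fst p * cis (2 * pi * x) ^ snd p =
      complex_of_real (trinomial_weight r s p) * cis (2 * pi * of_int (trinomial_freq k p) * x)"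
    for p
    by (simp add: trinomial_weight_def trinomial_freq_def power_mult_distrib Complex.DeMoivre cis_mult
        algebra_simps)
  have "Gpm k s x ^ r = (cmod ((1 + cis (2 * pi * x) + complex_of_real s * cis (2 * pi * real (k + 2) * x)) ^ r))\<^sup>2"
    unfolding Gpm_def norm_power by (simp add: power_mult[symmetric] mult.commute)
  also have "\<dots> = (cmod (\<Sum>p\<in>trinomial_terms r.
     complex_of_real (trinomial_weight r s p) * cis (2 * pi * of_int (trinomial_freq k p) * x)))\<^sup>2"
    unfolding trinomial_expansion trinomial_terms_def case_prod_beta expansion_term ..
  finally show ?thesis .
qed

lemma inj_on_trinomial_freq:
  assumes "r \<le> k + 1"
  shows "inj_on (trinomial_freq k) (trinomial_terms r)"
proof (rule inj_onI)
  fix p q assume "p \<in> trinomial_terms r" "q \<in> trinomial_terms r"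
    and eq: "trinomial_freq k p = trinomial_freq k q"
  have "snd p < k + 2" "snd q < k + 2"
    using assms \<open>p \<in> _\<close> \<open>q \<in> _\<close> unfolding trinomial_terms_def by auto
  moreover have "snd p + (k + 2) * fst p = snd q + (k + 2) * fst q"
    using eq unfolding trinomial_freq_def by (simp only: of_nat_eq_iff)
  moreover have "(b + m * c) div m = c" "(b + m * c) mod m = b" if "b < m" for b c m :: nat
    using that by simp_all
  ultimately show "p = q"
    by (metis prod.expand)
qed

lemma sum_trinomial_weight_squared:
  assumes "s = 1 \<or> s = -1"
  shows "(\<Sum>p\<in>trinomial_terms r. (trinomial_weight r s p)\<^sup>2) = real (A r)"
proof -
  have s_pow: "(s ^ c)\<^sup>2 = 1" for c :: nat
    using assms by (auto simp: power_mult_distrib simp flip: power_mult)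
  have central: "(\<Sum>b\<le>m. (real (m choose b))\<^sup>2) = real ((2 * m) choose m)" for m
    by (simp flip: choose_square_sum add: of_nat_sum)
  have "(\<Sum>p\<in>trinomial_terms r. (trinomial_weight r s p)\<^sup>2) =
      (\<Sum>c\<le>r. (real (r choose c))\<^sup>2 * (\<Sum>b\<le>r - c. (real ((r - c) choose b))\<^sup>2))"
    unfolding trinomial_terms_def trinomial_weight_def
    by (simp add: sum.Sigma case_prod_beta power_mult_distrib s_pow sum_distrib_left)
  also have "\<dots> = real (A r)"
    unfolding A_def central by (simp add: atLeast0AtMost right_diff_distrib')
  finally show ?thesis .
qed

lemma has_integral_Gpm_power:
  assumes "s = 1 \<or> s = -1" and "r \<le> k + 1"
  shows "((\<lambda>x. Gpm k s x ^ r) has_integral real (A r) / 2) {0..1/2}"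
  using parseval_half_period[OF finite_trinomial_terms inj_on_trinomial_freq[OF assms(2)], of "trinomial_weight r s"]
  unfolding Gpm_power_eq_cmod_sum sum_trinomial_weight_squared[OF assms(1)] .

lemma Gpm_nonneg: "0 \<le> Gpm k s x"
  unfolding Gpm_def by simp

lemma Gpm_le_9:
  assumes "s = 1 \<or> s = -1"
  shows "Gpm k s x \<le> 9"
proof -
  have "cmod (1 + cis (2 * pi * x) + complex_of_real s * cis (2 * pi * real (k + 2) * x))
      \<le> cmod 1 + cmod (cis (2 * pi * x)) + cmod (complex_of_real s * cis (2 * pi * real (k + 2) * x))"
    by (meson add_right_mono norm_triangle_ineq order_trans)
  also have "\<dots> = 3" using assms by (auto simp: norm_mult)
  finally have "(cmod (1 + cis (2 * pi * x) + complex_of_real s * cis (2 * pi * real (k + 2) * x)))\<^sup>2 \<le> 3\<^sup>2"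
    by (intro power_mono) auto
  then show ?thesis
    unfolding Gpm_def by simp
qed

lemma continuous_on_Gpm: "continuous_on T (Gpm k s)"
  unfolding Gpm_def by (intro continuous_intros)

lemma A_pos: "0 < A r"
proof -
  have "(r choose r)\<^sup>2 * ((2 * r - 2 * r) choose (r - r)) \<le> A r"
    unfolding A_def by (rule member_le_sum) auto
  then show ?thesis by simp
qed

lemma powr_le_powr_bound_mult_power:
  fixes y M \<tau> :: real
  assumes "0 \<le> y" "y \<le> M" "real \<rho> < \<tau>"
  shows "y powr \<tau> \<le> M powr (\<tau> - real \<rho>) * y ^ \<rho>"
proof (cases "y = 0")
  case False
  then have "0 < y" using assms(1) by simp
  have "y powr \<tau> = y powr (\<tau> - real \<rho>) * y powr real \<rho>"
    by (simp flip: powr_add)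
  also have "\<dots> = y powr (\<tau> - real \<rho>) * y ^ \<rho>"
    using \<open>0 < y\<close> by (simp add: powr_realpow)
  also have "\<dots> \<le> M powr (\<tau> - real \<rho>) * y ^ \<rho>"
    using assms \<open>0 < y\<close> by (intro mult_right_mono powr_mono2) auto
  finally show ?thesis .
qed simp

text \<open>The concave function \<open>y \<mapsto> y\<^sup>p\<close> lies below its tangent line at \<open>c\<close>.\<close>

lemma powr_le_tangent_line:
  fixes y c p :: real
  assumes "0 \<le> y" "0 < c" "0 < p" "p < 1"
  shows "y powr p \<le> c powr (p - 1) * (p * y + (1 - p) * c)"
proof (cases "y = 0")
  case True
  then show ?thesis using assms by simp
next
  case False
  then have "y powr p * c powr (1 - p) \<le> p * y + (1 - p) * c"
    using assms by (intro Youngs_inequality_0) auto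
  then have "c powr (p - 1) * (y powr p * c powr (1 - p)) \<le> c powr (p - 1) * (p * y + (1 - p) * c)"
    by (intro mult_left_mono) auto
  moreover have "c powr (p - 1) * (y powr p * c powr (1 - p)) = y powr p"
    using assms(2) by (simp add: mult_ac flip: powr_add)
  ultimately show ?thesis by simp
qed

lemma integral_powr_le_of_bounded:
  fixes f :: "real \<Rightarrow> real"
  assumes "continuous_on {a..b} f" and "\<And>x. x \<in> {a..b} \<Longrightarrow> 0 \<le> f x \<and> f x \<le> M"
    and "((\<lambda>x. f x ^ \<rho>) has_integral J) {a..b}" and "real \<rho> < \<tau>"
  shows "integral {a..b} (\<lambda>x. f x powr \<tau>) \<le> M powr (\<tau> - real \<rho>) * J"
proof (rule has_integral_le)
  have "continuous_on {a..b} (\<lambda>x. f x powr \<tau>)"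
    using assms by (intro continuous_on_powr' continuous_on_const) auto
  then show "((\<lambda>x. f x powr \<tau>) has_integral integral {a..b} (\<lambda>x. f x powr \<tau>)) {a..b}"
    using integrable_continuous_interval by blast
  show "((\<lambda>x. M powr (\<tau> - real \<rho>) * f x ^ \<rho>) has_integral M powr (\<tau> - real \<rho>) * J) {a..b}"
    using assms(3) by (rule has_integral_mult_right)
qed (use assms(2,4) powr_le_powr_bound_mult_power in blast)

lemma integral_powr_le_powr_mean:
  fixes f :: "real \<Rightarrow> real"
  assumes "a \<le> b" and "continuous_on {a..b} f" and "\<And>x. x \<in> {a..b} \<Longrightarrow> 0 \<le> f x"
    and "((\<lambda>x. f x ^ \<rho>) has_integral (b - a) * c) {a..b}" and "0 < c" and "0 < \<tau>" "\<tau> < real \<rho>"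
  shows "integral {a..b} (\<lambda>x. f x powr \<tau>) \<le> (b - a) * c powr (\<tau> / real \<rho>)"
proof -
  define p where "p = \<tau> / real \<rho>"
  have p: "0 < p" "p < 1" using assms(6,7) unfolding p_def by (auto simp: field_simps)
  have tangent: "f x powr \<tau> \<le> c powr (p - 1) * (p * f x ^ \<rho> + (1 - p) * c)" if "x \<in> {a..b}" for x
  proof -
    have "f x powr \<tau> = (f x powr real \<rho>) powr p"
      using assms(6,7) by (simp add: p_def powr_powr)
    also have "f x powr real \<rho> = f x ^ \<rho>"
      using assms(3)[OF that] assms(6,7) by (intro powr_realpow') auto
    finally have "f x powr \<tau> = (f x ^ \<rho>) powr p" .
    then show ?thesis
      using powr_le_tangent_line[of "f x ^ \<rho>" c p] assms(3)[OF that] assms(5) p by simp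
  qed
  have "integral {a..b} (\<lambda>x. f x powr \<tau>) \<le> c powr (p - 1) * (p * ((b - a) * c) + (1 - p) * c * (b - a))"
  proof (rule has_integral_le)
    have "continuous_on {a..b} (\<lambda>x. f x powr \<tau>)"
      using assms by (intro continuous_on_powr' continuous_on_const) auto
    then show "((\<lambda>x. f x powr \<tau>) has_integral integral {a..b} (\<lambda>x. f x powr \<tau>)) {a..b}"
      using integrable_continuous_interval by blast
    have "((\<lambda>x. (1 - p) * c) has_integral (1 - p) * c * (b - a)) {a..b}"
      using has_integral_const_real[of "(1 - p) * c" a b] assms(1) by (simp add: mult.commute)
    then show "((\<lambda>x. c powr (p - 1) * (p * f x ^ \<rho> + (1 - p) * c)) has_integral
        c powr (p - 1) * (p * ((b - a) * c) + (1 - p) * c * (b - a))) {a..b}"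
      by (intro has_integral_mult_right has_integral_add has_integral_mult_right[OF assms(4)])
  qed (use tangent in blast)
  also have "\<dots> = (b - a) * (c powr (p - 1) * c)"
    by (simp add: algebra_simps)
  also have "\<dots> = (b - a) * c powr (\<tau> / real \<rho>)"
    using powr_add[of c "p - 1" 1] assms(5) unfolding p_def by simp
  finally show ?thesis .
qed

theorem proposition1:
  fixes k \<rho> :: nat and \<tau> s :: real
  assumes "s = 1 \<or> s = -1"
    and "\<rho> \<le> k + 1"
    and "\<tau> > 0"
  shows "(\<tau> > real \<rho> \<longrightarrow>
           integral {0..1/2} (\<lambda>x. Gpm k s x powr \<tau>) \<le> 1/2 * 9 powr (\<tau> - real \<rho>) * real (A \<rho>))
       \<and> (\<tau> < real \<rho> \<longrightarrow>
           integral {0..1/2} (\<lambda>x. Gpm k s x powr \<tau>) \<le> 1/2 * real (A \<rho>) powr (\<tau> / real \<rho>))"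
proof (intro conjI impI)
  have moment: "((\<lambda>x. Gpm k s x ^ \<rho>) has_integral (1/2 - 0) * real (A \<rho>)) {0..1/2}"
    using has_integral_Gpm_power[OF assms(1,2)] by simp
  have bounds: "0 \<le> Gpm k s x \<and> Gpm k s x \<le> 9" for x
    using Gpm_nonneg Gpm_le_9[OF assms(1)] by blast
  show "integral {0..1/2} (\<lambda>x. Gpm k s x powr \<tau>) \<le> 1/2 * 9 powr (\<tau> - real \<rho>) * real (A \<rho>)"
    if "\<tau> > real \<rho>"
    using integral_powr_le_of_bounded[OF continuous_on_Gpm bounds moment that] by simp
  show "integral {0..1/2} (\<lambda>x. Gpm k s x powr \<tau>) \<le> 1/2 * real (A \<rho>) powr (\<tau> / real \<rho>)"
    if "\<tau> < real \<rho>"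
    using integral_powr_le_powr_mean[OF _ continuous_on_Gpm Gpm_nonneg moment _ assms(3) that] A_pos
    by simp
qed

end
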